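(* Let $s$ be a positive integer. There exists a linear $(2,s-1,s,2)$-AONT if and only if $s\ge4$.
   Context: For integers $1\le t_i\le t_o\le s$, a linear $(t_i,t_o,s,q)$-AONT is given by an invertible $s\times s$ matrix $M$ over $\mathbb{F}_q$ defining the map $\mathbf{x}\mapsto\mathbf{y}=\mathbf{x}M^{-1}$ on row vectors of $\mathbb{F}_q^s$, such that for every set $I$ of $t_i$ input coordinates and every set $J$ of $s-t_o$ output coordinates, the pair $((x_i)_{i\in I},(y_j)_{j\in J})$ takes every value in $\mathbb{F}_q^{t_i+s-t_o}$ equally often as $\mathbf{x}$ ranges over $\mathbb{F}_q^s$. Equivalently, $M$ is invertible and every $t_o\times t_i$ submatrix of $M$ has rank $t_i$. (Such an object requires $t_i\le t_o$, so none exists with $t_i=2>t_o=s-1$.) *)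

theory Defs
  imports "HOL-Analysis.Analysis"
begin

text \<open>Linear (t_i, t_o, s, q)-AONT over the finite field 'a (q = CARD('a)),
  with s = CARD('n).  The invertible matrix M defines the map x \<mapsto> y = x M^{-1}
  on row vectors.\<close>

definition linear_AONT :: "nat \<Rightarrow> nat \<Rightarrow> ('a::{field,finite})^'n^'n \<Rightarrow> bool" where
  "linear_AONT ti to M \<longleftrightarrow>
     1 \<le> ti \<and> ti \<le> to \<and> to \<le> CARD('n) \<and> invertible M \<and>
     (\<forall>I J. card I = ti \<longrightarrow> card J = CARD('n) - to \<longrightarrow>
        (\<forall>a\<in>I \<rightarrow>\<^sub>E (UNIV::'a set). \<forall>b\<in>J \<rightarrow>\<^sub>E (UNIV::'a set).
         \<forall>a'\<in>I \<rightarrow>\<^sub>E (UNIV::'a set). \<forall>b'\<in>J \<rightarrow>\<^sub>E (UNIV::'a set).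
           card {x::'a^'n. restrict (\<lambda>i. x $ i) I = a \<and>
                            restrict (\<lambda>j. (x v* matrix_inv M) $ j) J = b}
         = card {x::'a^'n. restrict (\<lambda>i. x $ i) I = a' \<and>
                            restrict (\<lambda>j. (x v* matrix_inv M) $ j) J = b'}))"

end

theory Submission imports Defs begin

text \<open>Since t_o = s - 1, the output set J is a single coordinate j, and with N = M^{-1} the
  pair (x_I, y_j) is equidistributed exactly when the linear form y_j = \<Sum>_k x_k N_kj is not a
  function of x_I, i.e. when column j of N has a nonzero entry outside I.  For s = 3 and q = 2,
  taking I to be the complement of a single row k shows that every entry of N is 1, so N has
  identical rows and is singular.  For s \<ge> 4, the all-ones matrix with all diagonal entries but
  one cleared is invertible and has at most one zero per column, so it meets the condition.\<close>

lemma matrix_mul_matrix_inv: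
  fixes A :: "'a::field^'n^'n"
  assumes "invertible A"
  shows "A ** matrix_inv A = mat 1 \<and> matrix_inv A ** A = mat 1"
  using assms unfolding invertible_def matrix_inv_def by (rule someI_ex)

lemma invertible_matrix_inv:
  fixes A :: "'a::field^'n^'n"
  assumes "invertible A"
  shows "invertible (matrix_inv A)"
  using matrix_mul_matrix_inv[OF assms] unfolding invertible_def by blast

lemma matrix_inv_matrix_inv:
  fixes A :: "'a::field^'n^'n"
  assumes "invertible A"
  shows "matrix_inv (matrix_inv A) = A"
  using matrix_mul_matrix_inv[OF assms] matrix_mul_matrix_inv[OF invertible_matrix_inv[OF assms]]
  by (metis matrix_mul_assoc matrix_mul_lid matrix_mul_rid)

definition aont_fibre ::
    "'n set \<Rightarrow> 'm set \<Rightarrow> 'a::semiring_1^'m^'n \<Rightarrow> ('n \<Rightarrow> 'a) \<Rightarrow> ('m \<Rightarrow> 'a) \<Rightarrow> ('a^'n) set" where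
  "aont_fibre I J N a b = {x. restrict (\<lambda>i. x $ i) I = a \<and> restrict (\<lambda>j. (x v* N) $ j) J = b}"

lemma card_aont_fibre_eq:
  fixes N :: "'a::ring_1^'m^'n"
  assumes z: "z \<in> aont_fibre I J N a b" and z': "z' \<in> aont_fibre I J N a' b'"
  shows "card (aont_fibre I J N a b) = card (aont_fibre I J N a' b')"
proof -
  have fibre_eq: "aont_fibre I J N (restrict (\<lambda>i. y $ i) I) (restrict (\<lambda>j. (y v* N) $ j) J)
      = {x. (\<forall>i\<in>I. x $ i = y $ i) \<and> (\<forall>j\<in>J. (x v* N) $ j = (y v* N) $ j)}" for y
    by (auto simp: aont_fibre_def fun_eq_iff restrict_def)
  have "a = restrict (\<lambda>i. z $ i) I" "b = restrict (\<lambda>j. (z v* N) $ j) J"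
       "a' = restrict (\<lambda>i. z' $ i) I" "b' = restrict (\<lambda>j. (z' v* N) $ j) J"
    using z z' by (auto simp: aont_fibre_def)
  moreover have "bij_betw (\<lambda>x. x - z + z')
      {x. (\<forall>i\<in>I. x $ i = z $ i) \<and> (\<forall>j\<in>J. (x v* N) $ j = (z v* N) $ j)}
      {x. (\<forall>i\<in>I. x $ i = z' $ i) \<and> (\<forall>j\<in>J. (x v* N) $ j = (z' v* N) $ j)}"
    by (rule bij_betw_byWitness[where f' = "\<lambda>x. x - z' + z"]) (auto simp: algebra_simps)
  ultimately show ?thesis
    using bij_betw_same_card by (simp add: fibre_eq)
qed

lemma linear_AONT_column_support:
  fixes M :: "'a::{field,finite}^'n^'n"
  assumes aont: "linear_AONT ti (CARD('n) - 1) M" and I: "card I = ti"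
  shows "\<exists>k. k \<notin> I \<and> matrix_inv M $ k $ j \<noteq> 0"
proof (rule ccontr)
  assume "\<not> ?thesis"
  then have vanish: "matrix_inv M $ k $ j = 0" if "k \<notin> I" for k
    using that by blast
  define a where "a = restrict (\<lambda>_. 0::'a) I"
  define b where "b b0 = restrict (\<lambda>_. b0::'a) {j}" for b0
  have "card (aont_fibre I {j} (matrix_inv M) a (b 0))
      = card (aont_fibre I {j} (matrix_inv M) a (b 1))"
    using aont I unfolding linear_AONT_def aont_fibre_def[symmetric]
    by (auto simp: a_def b_def)
  moreover have "0 \<in> aont_fibre I {j} (matrix_inv M) a (b 0)"
    by (auto simp: aont_fibre_def a_def b_def)
  moreover have "aont_fibre I {j} (matrix_inv M) a (b 1) = {}"
  proof -
    have "(x v* matrix_inv M) $ j = 0" if "\<forall>i\<in>I. x $ i = 0" for x :: "'a^'n"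
      using that vanish by (auto simp: vector_matrix_mult_def intro!: sum.neutral)
    then show ?thesis
      by (auto simp: aont_fibre_def a_def b_def fun_eq_iff restrict_def split: if_splits)
        (metis zero_neq_one)
  qed
  ultimately show False
    by (metis card_0_eq empty_iff finite)
qed

lemma ex_vec_with_coords_and_product_entry:
  fixes N :: "'a::field^'m^'n"
  assumes "k \<notin> I" and "N $ k $ j \<noteq> 0"
  shows "\<exists>z. (\<forall>i\<in>I. z $ i = a i) \<and> (z v* N) $ j = c"
proof -
  define t where "t = (c - (\<Sum>i\<in>I. a i * N $ i $ j)) / N $ k $ j"
  define z :: "'a^'n" where "z = (\<chi> i. if i \<in> I then a i else if i = k then t else 0)"
  have "(z v* N) $ j
      = (\<Sum>i\<in>UNIV. if i \<in> I then a i * N $ i $ j else if i = k then t * N $ i $ j else 0)"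
    unfolding z_def vector_matrix_mult_def by (auto intro: sum.cong)
  also have "\<dots> = (\<Sum>i\<in>I. a i * N $ i $ j) + (\<Sum>i\<in>UNIV - I. if i = k then t * N $ i $ j else 0)"
    by (simp add: sum.If_cases Int_absorb1 Diff_eq)
  also have "\<dots> = c"
    using assms by (simp add: sum.delta t_def)
  finally have "(z v* N) $ j = c" .
  moreover have "\<forall>i\<in>I. z $ i = a i"
    by (simp add: z_def)
  ultimately show ?thesis
    by blast
qed

lemma linear_AONT_if_column_support:
  fixes M :: "'a::{field,finite}^'n^'n"
  assumes "1 \<le> ti" "ti \<le> CARD('n) - 1" "invertible M"
    and support: "\<And>I j. card I = ti \<Longrightarrow> \<exists>k. k \<notin> I \<and> matrix_inv M $ k $ j \<noteq> 0"
  shows "linear_AONT ti (CARD('n) - 1) M"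
  unfolding linear_AONT_def aont_fibre_def[symmetric]
proof (intro conjI allI impI ballI)
  fix I J :: "'n set" and a b a' b'
  assume I: "card I = ti" and "card J = CARD('n) - (CARD('n) - 1)"
  then have "card J = 1"
    by (simp add: Suc_leI)
  then obtain j where J: "J = {j}"
    by (rule card_1_singletonE)
  obtain k where "k \<notin> I" "matrix_inv M $ k $ j \<noteq> 0"
    using support[OF I] by blast
  note solvable = ex_vec_with_coords_and_product_entry[OF this]
  have nonempty: "\<exists>z. z \<in> aont_fibre I J (matrix_inv M) a b"
    if "a \<in> I \<rightarrow>\<^sub>E (UNIV::'a set)" "b \<in> J \<rightarrow>\<^sub>E (UNIV::'a set)" for a b
    using solvable[of a "b j"] that
    by (auto simp: aont_fibre_def J fun_eq_iff PiE_iff extensional_def)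
  assume "a \<in> I \<rightarrow>\<^sub>E (UNIV::'a set)" "b \<in> J \<rightarrow>\<^sub>E (UNIV::'a set)"
    "a' \<in> I \<rightarrow>\<^sub>E (UNIV::'a set)" "b' \<in> J \<rightarrow>\<^sub>E (UNIV::'a set)"
  with nonempty
  show "card (aont_fibre I J (matrix_inv M) a b) = card (aont_fibre I J (matrix_inv M) a' b')"
    by (metis card_aont_fibre_eq)
qed (use assms in auto)

lemma eq_one_if_nonzero_card_2:
  fixes x :: "'a::{field,finite}"
  assumes "CARD('a) = 2" and "x \<noteq> 0"
  shows "x = 1"
proof -
  have "card {0::'a, 1} = CARD('a)"
    using assms(1) by simp
  then have "(UNIV::'a set) = {0, 1}"
    by (metis card_subset_eq finite subset_UNIV)
  then show ?thesis
    using assms(2) by auto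
qed

lemma no_binary_linear_AONT_full:
  fixes M :: "'a::{field,finite}^'n^'n"
  assumes q: "CARD('a) = 2" and s: "2 \<le> CARD('n)"
  shows "\<not> linear_AONT (CARD('n) - 1) (CARD('n) - 1) M"
proof
  assume aont: "linear_AONT (CARD('n) - 1) (CARD('n) - 1) M"
  have ones: "matrix_inv M $ k $ j = 1" for k j
  proof -
    have "card (- {k}) = CARD('n) - 1"
      by (simp add: Compl_eq_Diff_UNIV card_Diff_singleton)
    then have "matrix_inv M $ k $ j \<noteq> 0"
      using linear_AONT_column_support[OF aont] by fastforce
    then show ?thesis
      using eq_one_if_nonzero_card_2[OF q] by blast
  qed
  obtain u v :: 'n where "u \<noteq> v"
    using s by (metis card_2_iff' card_le_Suc0_iff_eq finite not_less_eq_eq numeral_2_eq_2)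
  moreover have "row u (matrix_inv M) = row v (matrix_inv M)"
    by (simp add: row_def ones)
  ultimately have "det (matrix_inv M) = 0"
    by (rule det_identical_rows)
  moreover have "invertible M"
    using aont by (simp add: linear_AONT_def)
  ultimately show False
    using invertible_matrix_inv invertible_det_nz by blast
qed

lemma invertible_ones_except_diagonal:
  fixes p :: "'n::finite"
  shows "invertible (\<chi> i k. if i = k \<and> i \<noteq> p then 0 else 1 :: 'a::field^'n^'n)"
    (is "invertible ?N")
proof -
  have "x = 0" if x: "?N *v x = 0" for x :: "'a^'n"
  proof -
    define S where "S = (\<Sum>k\<in>UNIV. x $ k)"
    have row_eq: "(?N *v x) $ i = S - (if i \<noteq> p then x $ i else 0)" for i
    proof -
      have "(?N *v x) $ i = (\<Sum>k\<in>UNIV. x $ k - (if k = i \<and> i \<noteq> p then x $ k else 0))"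
        unfolding matrix_vector_mult_def by (auto intro!: sum.cong)
      also have "\<dots> = S - (if i \<noteq> p then x $ i else 0)"
        unfolding S_def by (simp add: sum_subtractf sum.delta)
      finally show ?thesis .
    qed
    have "S = 0"
      using row_eq[of p] x by simp
    then have off_p: "x $ i = 0" if "i \<noteq> p" for i
      using row_eq[of i] x that by simp
    then have "S = x $ p"
      unfolding S_def by (simp add: sum.delta' sum.neutral[of "- {p}"] sum.remove[of UNIV p])
    then show "x = 0"
      using \<open>S = 0\<close> off_p by (metis vec_eq_iff zero_index)
  qed
  then show ?thesis
    using matrix_left_invertible_ker invertible_left_inverse by blast
qed

lemma linear_AONT_exists:
  assumes "1 \<le> ti" and "ti + 2 \<le> CARD('n)"
  shows "\<exists>M :: 'a::{field,finite}^'n^'n. linear_AONT ti (CARD('n) - 1) M"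
proof -
  fix p :: 'n
  define N :: "'a^'n^'n" where "N = (\<chi> i k. if i = k \<and> i \<noteq> p then 0 else 1)"
  have N: "invertible N"
    unfolding N_def by (rule invertible_ones_except_diagonal)
  have "\<exists>k. k \<notin> I \<and> N $ k $ j \<noteq> 0" if "card I = ti" for I j
  proof -
    have "card (I \<union> {j}) < CARD('n)"
      using card_Un_le[of I "{j}"] that assms(2) by simp
    then obtain k where "k \<notin> I \<union> {j}"
      by (metis UNIV_I card_mono finite leD subsetI)
    then show ?thesis
      by (auto simp: N_def)
  qed
  then have "linear_AONT ti (CARD('n) - 1) (matrix_inv N)"
    using assms N
    by (intro linear_AONT_if_column_support) (auto simp: invertible_matrix_inv matrix_inv_matrix_inv)
  then show ?thesis ..
qed

theorem mainTheorem15: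
  assumes "CARD('a::{field,finite}) = 2"
  shows "(\<exists>M :: 'a^'n::finite^'n. linear_AONT 2 (CARD('n) - 1) M) \<longleftrightarrow> CARD('n) \<ge> 4"
proof
  assume "\<exists>M :: 'a^'n::finite^'n. linear_AONT 2 (CARD('n) - 1) M"
  then obtain M :: "'a^'n^'n" where M: "linear_AONT 2 (CARD('n) - 1) M" ..
  then have "2 \<le> CARD('n) - 1"
    unfolding linear_AONT_def by blast
  moreover have "CARD('n) \<noteq> 3"
    using no_binary_linear_AONT_full[OF assms, of M] M by auto
  ultimately show "4 \<le> CARD('n)"
    by linarith
next
  assume "4 \<le> CARD('n)"
  then show "\<exists>M :: 'a^'n::finite^'n. linear_AONT 2 (CARD('n) - 1) M"
    by (intro linear_AONT_exists) simp_all
qed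

end
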